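(* In the full-information online setting for length-$\ell$ menus of lotteries over $m$ items, when every buyer is one of $V$ known types (arriving in an arbitrary order), there is an algorithm with regret $O\big(m^2H\ell\sqrt T\ln(V\ell)\big)$.
   Context: A length-$\ell$ menu of lotteries over $m$ items consists of entries $(\vec\phi^{(j)},p^{(j)})$, $j=1,\dots,\ell$, with $\vec\phi^{(j)}\in[0,1]^m$, $p^{(j)}\in[0,mH]$, plus the null entry $(\vec0,0)$. A buyer with item values $v(\vec e_i)\in[0,H]$ (additive or unit-demand) selects an entry maximizing $\sum_i v(\vec e_i)\phi^{(j)}[i]-p^{(j)}$ and pays its price (the revenue). In full information the learner observes the revenue of every menu after each round. Regret is $\mathbb E[\max_{\vec\rho}\sum_t u_t(\vec\rho)-\sum_t u_t(\vec\rho_t)]$ over all length-$\ell$ menus. *)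

theory Defs
  imports "HOL-Probability.Probability"
begin

text \<open>A length-l menu over m items: entries j = 1..l, each a pair (lottery, price).
  Lottery: item index i < m maps to allocation probability. Index 0 is the null entry.\<close>
type_synonym menu = "nat \<Rightarrow> (nat \<Rightarrow> real) \<times> real"

definition valid_menu :: "nat \<Rightarrow> real \<Rightarrow> nat \<Rightarrow> menu \<Rightarrow> bool" where
  "valid_menu m H l \<rho> \<longleftrightarrow>
     (\<forall>j\<in>{1..l}. (\<forall>i<m. 0 \<le> fst (\<rho> j) i \<and> fst (\<rho> j) i \<le> 1)
                  \<and> 0 \<le> snd (\<rho> j) \<and> snd (\<rho> j) \<le> real m * H)"

definition entry :: "menu \<Rightarrow> nat \<Rightarrow> (nat \<Rightarrow> real) \<times> real" where
  "entry \<rho> j = (if j = 0 then ((\<lambda>_. 0), 0) else \<rho> j)"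

text \<open>Buyer utility for entry j; v i is the value v(e_i) of item i.
  (Same formula for additive and unit-demand buyers.)\<close>
definition buyer_util :: "nat \<Rightarrow> (nat \<Rightarrow> real) \<Rightarrow> menu \<Rightarrow> nat \<Rightarrow> real" where
  "buyer_util m v \<rho> j = (\<Sum>i<m. v i * fst (entry \<rho> j) i) - snd (entry \<rho> j)"

definition revenue :: "nat \<Rightarrow> nat \<Rightarrow> (nat \<Rightarrow> real) \<Rightarrow> menu \<Rightarrow> real" where
  "revenue m l v \<rho> = Max {snd (entry \<rho> j) | j. j \<le> l \<and>
       (\<forall>k\<le>l. buyer_util m v \<rho> k \<le> buyer_util m v \<rho> j)}"

text \<open>Full-information online learner: maps the observed history of revenue
  functions (one per past round) to a distribution over menus for the next round.\<close>
type_synonym learner = "(menu \<Rightarrow> real) list \<Rightarrow> menu pmf"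

definition learner_reward :: "learner \<Rightarrow> (nat \<Rightarrow> menu \<Rightarrow> real) \<Rightarrow> nat \<Rightarrow> real" where
  "learner_reward A u T =
     (\<Sum>t<T. measure_pmf.expectation (A (map u [0..<t])) (u t))"

definition menu_regret :: "nat \<Rightarrow> real \<Rightarrow> nat \<Rightarrow> learner \<Rightarrow> (nat \<Rightarrow> nat \<Rightarrow> real) \<Rightarrow> nat \<Rightarrow> real" where
  "menu_regret m H l A b T =
     (SUP \<rho>\<in>{\<rho>. valid_menu m H l \<rho>}. \<Sum>t<T. revenue m l (b t) \<rho>)
     - learner_reward A (\<lambda>t. revenue m l (b t)) T"

end

theory Submission
  imports Defs "HOL-Library.Function_Algebras"
begin

text \<open>Since there are finitely many buyer types, the best menu in hindsight can be replaced by one of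
  finitely many candidates. Fix the entry each type buys from that menu: the constraints that every
  type still weakly prefers its entry, together with the bounds of a valid menu, cut out a polytope on
  which the collected revenue is linear, so some vertex does at least as well, and breaking ties
  towards the highest price only helps. A vertex is determined by at most \<open>\<ell>(m + 1)\<close> of the
  \<open>O(|V|\<ell>\<^sup>2 + \<ell>m)\<close> constraints, so there are \<open>N \<le> (|V|\<ell>)\<^bsup>O(m\<^sup>2\<ell>)\<^esup>\<close> candidates. Exponential
  weights over the candidates, with rewards in \<open>[0, mH]\<close>, has regret \<open>O(mH \<surd>(T ln N))\<close>.\<close>

definition hedge_weight :: "real \<Rightarrow> (menu \<Rightarrow> real) list \<Rightarrow> menu \<Rightarrow> real" where
  "hedge_weight \<eta> h x = exp (\<eta> * sum_list (map (\<lambda>g. g x) h))"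

definition hedge_potential :: "real \<Rightarrow> menu set \<Rightarrow> (menu \<Rightarrow> real) list \<Rightarrow> real" where
  "hedge_potential \<eta> E h = (\<Sum>y\<in>E. hedge_weight \<eta> h y)"

definition hedge :: "real \<Rightarrow> menu set \<Rightarrow> learner" where
  "hedge \<eta> E h = embed_pmf (\<lambda>x. if x \<in> E then hedge_weight \<eta> h x / hedge_potential \<eta> E h else 0)"

lemma hedge_weight_pos: "hedge_weight \<eta> h x > 0"
  by (simp add: hedge_weight_def)

lemma hedge_weight_snoc: "hedge_weight \<eta> (h @ [g]) x = hedge_weight \<eta> h x * exp (\<eta> * g x)"
  by (simp add: hedge_weight_def distrib_left exp_add)

lemma hedge_weight_history:
  "hedge_weight \<eta> (map u [0..<t]) x = exp (\<eta> * (\<Sum>s<t. u s x))"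
  by (induction t) (simp_all add: hedge_weight_snoc hedge_weight_def distrib_left exp_add)

lemma hedge_potential_pos:
  assumes "finite E" "E \<noteq> {}"
  shows "hedge_potential \<eta> E h > 0"
  unfolding hedge_potential_def using assms by (intro sum_pos) (auto simp: hedge_weight_pos)

lemma pmf_hedge:
  assumes "finite E" "E \<noteq> {}"
  shows "pmf (hedge \<eta> E h) x = (if x \<in> E then hedge_weight \<eta> h x / hedge_potential \<eta> E h else 0)"
  unfolding hedge_def
proof (rule pmf_embed_pmf)
  have pos: "hedge_potential \<eta> E h > 0" by (rule hedge_potential_pos[OF assms])
  then show "0 \<le> (if x \<in> E then hedge_weight \<eta> h x / hedge_potential \<eta> E h else 0)" for x
    by (simp add: hedge_weight_pos less_imp_le)
  have "(\<integral>\<^sup>+x. ennreal (if x \<in> E then hedge_weight \<eta> h x / hedge_potential \<eta> E h else 0)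
      \<partial>count_space UNIV) = (\<Sum>x\<in>E. ennreal (hedge_weight \<eta> h x / hedge_potential \<eta> E h))"
    by (subst nn_integral_count_space') (use assms in auto)
  also have "\<dots> = ennreal (\<Sum>x\<in>E. hedge_weight \<eta> h x / hedge_potential \<eta> E h)"
    using pos by (intro sum_ennreal) (simp add: hedge_weight_pos less_imp_le)
  also have "(\<Sum>x\<in>E. hedge_weight \<eta> h x / hedge_potential \<eta> E h) = 1"
    using pos by (simp add: sum_divide_distrib[symmetric] hedge_potential_def)
  finally show "(\<integral>\<^sup>+x. ennreal (if x \<in> E then hedge_weight \<eta> h x / hedge_potential \<eta> E h else 0)
      \<partial>count_space UNIV) = 1" by simp
qed

lemma set_pmf_hedge:
  assumes "finite E" "E \<noteq> {}"
  shows "set_pmf (hedge \<eta> E h) \<subseteq> E"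
  using pmf_hedge[OF assms] by (auto simp: set_pmf_eq)

lemma expectation_hedge:
  assumes "finite E" "E \<noteq> {}"
  shows "measure_pmf.expectation (hedge \<eta> E h) g
     = (\<Sum>x\<in>E. hedge_weight \<eta> h x * g x) / hedge_potential \<eta> E h"
proof -
  have "measure_pmf.expectation (hedge \<eta> E h) g = (\<Sum>x\<in>E. pmf (hedge \<eta> E h) x *\<^sub>R g x)"
    by (rule integral_measure_pmf[OF assms(1)]) (use set_pmf_hedge[OF assms] in auto)
  also have "\<dots> = (\<Sum>x\<in>E. hedge_weight \<eta> h x * g x / hedge_potential \<eta> E h)"
    by (rule sum.cong) (auto simp: pmf_hedge[OF assms])
  finally show ?thesis by (simp add: sum_divide_distrib)
qed

text \<open>One round of the exponential-weights analysis, using \<open>exp x \<le> 1 + x + x\<^sup>2\<close> for \<open>0 \<le> x \<le> 1\<close>.\<close>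
lemma hedge_potential_step:
  assumes E: "finite E" "E \<noteq> {}"
    and g: "\<And>x. x \<in> E \<Longrightarrow> 0 \<le> g x \<and> g x \<le> B"
    and \<eta>: "\<eta> > 0" "\<eta> * B \<le> 1"
  shows "hedge_potential \<eta> E (h @ [g])
    \<le> hedge_potential \<eta> E h * exp (\<eta> * measure_pmf.expectation (hedge \<eta> E h) g + \<eta>\<^sup>2 * B\<^sup>2)"
proof -
  let ?w = "hedge_weight \<eta> h" and ?W = "hedge_potential \<eta> E h"
  let ?e = "measure_pmf.expectation (hedge \<eta> E h) g"
  have "hedge_potential \<eta> E (h @ [g]) = (\<Sum>x\<in>E. ?w x * exp (\<eta> * g x))"
    by (simp add: hedge_potential_def hedge_weight_snoc)
  also have "\<dots> \<le> (\<Sum>x\<in>E. ?w x * (1 + \<eta> * g x + \<eta>\<^sup>2 * B\<^sup>2))"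
  proof (intro sum_mono mult_left_mono)
    fix x assume x: "x \<in> E"
    have gB: "\<eta> * g x \<le> \<eta> * B" using g[OF x] \<eta> by (intro mult_left_mono) auto
    have "exp (\<eta> * g x) \<le> 1 + \<eta> * g x + (\<eta> * g x)\<^sup>2"
      using g[OF x] \<eta> by (intro exp_bound order.trans[OF gB \<eta>(2)]) auto
    also have "(\<eta> * g x)\<^sup>2 \<le> \<eta>\<^sup>2 * B\<^sup>2"
      using g[OF x] \<eta> by (simp add: power_mult_distrib power_mono)
    finally show "exp (\<eta> * g x) \<le> 1 + \<eta> * g x + \<eta>\<^sup>2 * B\<^sup>2" by simp
  qed (simp add: hedge_weight_pos less_imp_le)
  also have "\<dots> = ?W * (1 + \<eta>\<^sup>2 * B\<^sup>2) + \<eta> * (\<Sum>x\<in>E. ?w x * g x)"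
    by (simp add: hedge_potential_def algebra_simps sum.distrib sum_distrib_left sum_distrib_right)
  also have "(\<Sum>x\<in>E. ?w x * g x) = ?W * ?e"
    using hedge_potential_pos[OF E, of \<eta> h] by (simp add: expectation_hedge[OF E])
  also have "?W * (1 + \<eta>\<^sup>2 * B\<^sup>2) + \<eta> * (?W * ?e) = ?W * (1 + (\<eta> * ?e + \<eta>\<^sup>2 * B\<^sup>2))"
    by (simp add: algebra_simps)
  also have "\<dots> \<le> ?W * exp (\<eta> * ?e + \<eta>\<^sup>2 * B\<^sup>2)"
    using hedge_potential_pos[OF E, of \<eta> h] by (intro mult_left_mono exp_ge_add_one_self) auto
  finally show ?thesis .
qed

lemma hedge_regret:
  assumes E: "finite E" "E \<noteq> {}"
    and u: "\<And>t x. t < T \<Longrightarrow> x \<in> E \<Longrightarrow> 0 \<le> u t x \<and> u t x \<le> B"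
    and \<eta>: "\<eta> > 0" "\<eta> * B \<le> 1"
    and x: "x \<in> E"
  shows "(\<Sum>t<T. u t x) \<le> learner_reward (hedge \<eta> E) u T + ln (card E) / \<eta> + \<eta> * B\<^sup>2 * T"
proof -
  define W where "W t = hedge_potential \<eta> E (map u [0..<t])" for t
  define e where "e t = measure_pmf.expectation (hedge \<eta> E (map u [0..<t])) (u t)" for t
  have W_bound: "W t \<le> card E * exp (\<eta> * (\<Sum>s<t. e s) + t * (\<eta>\<^sup>2 * B\<^sup>2))" if "t \<le> T" for t
    using that
  proof (induction t)
    case 0
    then show ?case by (simp add: W_def hedge_potential_def hedge_weight_def)
  next
    case (Suc t)
    have "W (Suc t) \<le> W t * exp (\<eta> * e t + \<eta>\<^sup>2 * B\<^sup>2)"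
      unfolding W_def e_def using Suc.prems
      by (simp only: upt_Suc_append[OF le0] map_append list.map) (intro hedge_potential_step E u \<eta>; simp)
    also have "\<dots> \<le> card E * exp (\<eta> * (\<Sum>s<t. e s) + t * (\<eta>\<^sup>2 * B\<^sup>2)) * exp (\<eta> * e t + \<eta>\<^sup>2 * B\<^sup>2)"
      using Suc by (intro mult_right_mono) auto
    also have "\<dots> = card E * exp (\<eta> * (\<Sum>s<Suc t. e s) + Suc t * (\<eta>\<^sup>2 * B\<^sup>2))"
      by (simp add: exp_add[symmetric] algebra_simps)
    finally show ?case .
  qed
  have "exp (\<eta> * (\<Sum>t<T. u t x)) \<le> W T"
    unfolding W_def hedge_potential_def hedge_weight_history[symmetric]
    using x E by (intro member_le_sum) (auto simp: hedge_weight_pos less_imp_le)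
  also have "\<dots> \<le> card E * exp (\<eta> * (\<Sum>t<T. e t) + T * (\<eta>\<^sup>2 * B\<^sup>2))" by (rule W_bound) simp
  finally have "\<eta> * (\<Sum>t<T. u t x) \<le> ln (card E) + (\<eta> * (\<Sum>t<T. e t) + T * (\<eta>\<^sup>2 * B\<^sup>2))"
    using E by (subst (asm) ln_le_cancel_iff[symmetric]) (auto simp: ln_mult card_gt_0_iff)
  then have "(\<Sum>t<T. u t x) \<le> ln (card E) / \<eta> + (\<Sum>t<T. e t) + \<eta> * B\<^sup>2 * T"
    using \<eta> by (simp add: field_simps power2_eq_square)
  then show ?thesis by (simp add: learner_reward_def e_def)
qed

lemma learner_reward_hedge_nonneg:
  assumes E: "finite E" "E \<noteq> {}" and u: "\<And>t x. t < T \<Longrightarrow> x \<in> E \<Longrightarrow> 0 \<le> u t x"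
  shows "learner_reward (hedge \<eta> E) u T \<ge> 0"
  unfolding learner_reward_def expectation_hedge[OF E] using u hedge_potential_pos[OF E]
  by (intro sum_nonneg divide_nonneg_nonneg mult_nonneg_nonneg) (auto simp: hedge_weight_pos less_imp_le)

text \<open>With \<open>\<eta> = \<surd>((ln N + 1) / T) / B\<close>; for \<open>T < ln N + 1\<close> the trivial bound \<open>B T\<close> already suffices.\<close>
lemma hedge_tuned_regret:
  assumes E: "finite E" "E \<noteq> {}" and B: "B > 0"
  obtains \<eta> where
    "\<And>u x. (\<And>t x. t < T \<Longrightarrow> x \<in> E \<Longrightarrow> 0 \<le> u t x \<and> u t x \<le> B) \<Longrightarrow> x \<in> E \<Longrightarrow>
       (\<Sum>t<T. u t x) \<le> learner_reward (hedge \<eta> E) u T + 2 * B * sqrt (ln (card E) + 1) * sqrt T"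
proof (cases "ln (card E) + 1 \<le> real T")
  case True
  define q where "q = sqrt (ln (card E) + 1)"
  define r where "r = sqrt (real T)"
  have L0: "ln (card E) \<ge> 0" using E by (simp add: Suc_le_eq card_gt_0_iff)
  have q0: "q > 0" using L0 by (simp add: q_def)
  have qr: "q \<le> r" unfolding q_def r_def using True by (rule real_sqrt_le_mono)
  with q0 have r0: "r > 0" by simp
  have rr: "r * r = real T" by (simp add: r_def)
  have \<eta>0: "q / (r * B) > 0" using q0 r0 B by simp
  have \<eta>B: "q / (r * B) * B \<le> 1" using qr r0 B by simp
  have "(\<Sum>t<T. u t x) \<le> learner_reward (hedge (q / (r * B)) E) u T + 2 * B * q * r"
    if u: "\<And>t x. t < T \<Longrightarrow> x \<in> E \<Longrightarrow> 0 \<le> u t x \<and> u t x \<le> B" and x: "x \<in> E" for u x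
  proof -
    have "ln (card E) / (q / (r * B)) \<le> (q * q) / (q / (r * B))"
      using \<eta>0 L0 by (intro divide_right_mono) (auto simp: q_def)
    also have "\<dots> = B * q * r" using q0 r0 B by (simp add: field_simps)
    finally have "ln (card E) / (q / (r * B)) \<le> B * q * r" .
    moreover have "q / (r * B) * B\<^sup>2 * T = B * q * r"
      using r0 B by (simp add: rr[symmetric] field_simps power2_eq_square)
    moreover have "(\<Sum>t<T. u t x) \<le> learner_reward (hedge (q / (r * B)) E) u T
        + ln (card E) / (q / (r * B)) + q / (r * B) * B\<^sup>2 * T"
      by (rule hedge_regret[OF E _ \<eta>0 \<eta>B x]) (rule u)
    ultimately show ?thesis by linarith
  qed
  from this[unfolded q_def r_def] show ?thesis by (rule that)
next
  case False
  have "(\<Sum>t<T. u t x) \<le> learner_reward (hedge 1 E) u T + 2 * B * sqrt (ln (card E) + 1) * sqrt T"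
    if u: "\<And>t x. t < T \<Longrightarrow> x \<in> E \<Longrightarrow> 0 \<le> u t x \<and> u t x \<le> B" and x: "x \<in> E" for u x
  proof -
    have "(\<Sum>t<T. u t x) \<le> (\<Sum>t<T. B)" using u x by (intro sum_mono) auto
    also have "\<dots> = B * (sqrt T * sqrt T)" by simp
    also have "\<dots> \<le> B * (sqrt (ln (card E) + 1) * sqrt T)"
      using False B by (intro mult_left_mono mult_right_mono real_sqrt_le_mono) auto
    also have "\<dots> \<le> 2 * B * sqrt (ln (card E) + 1) * sqrt T"
      using False B by simp
    finally show ?thesis
      using learner_reward_hedge_nonneg[OF E, of T u 1] u by fastforce
  qed
  then show ?thesis by (rule that)
qed

lemma finite_revenue_set:
  "finite {snd (entry \<rho> j) | j. j \<le> l \<and> (\<forall>k\<le>l. buyer_util m v \<rho> k \<le> buyer_util m v \<rho> j)}"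
  by (rule finite_subset[of _ "(\<lambda>j. snd (entry \<rho> j)) ` {..l}"]) auto

lemma revenue_ge_best_price:
  assumes "j \<le> l" "\<forall>k\<le>l. buyer_util m v \<rho> k \<le> buyer_util m v \<rho> j"
  shows "snd (entry \<rho> j) \<le> revenue m l v \<rho>"
  unfolding revenue_def by (rule Max_ge[OF finite_revenue_set]) (use assms in auto)

lemma revenue_attained:
  obtains j where "j \<le> l" "\<forall>k\<le>l. buyer_util m v \<rho> k \<le> buyer_util m v \<rho> j"
    "snd (entry \<rho> j) = revenue m l v \<rho>"
proof -
  let ?U = "buyer_util m v \<rho> ` {..l}"
  have "Max ?U \<in> ?U" by (rule Max_in) auto
  then obtain j0 where "j0 \<le> l" "buyer_util m v \<rho> j0 = Max ?U" by (auto simp del: Max_in)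
  then have "snd (entry \<rho> j0) \<in>
      {snd (entry \<rho> j) | j. j \<le> l \<and> (\<forall>k\<le>l. buyer_util m v \<rho> k \<le> buyer_util m v \<rho> j)}"
    by auto
  then have "revenue m l v \<rho> \<in>
      {snd (entry \<rho> j) | j. j \<le> l \<and> (\<forall>k\<le>l. buyer_util m v \<rho> k \<le> buyer_util m v \<rho> j)}"
    unfolding revenue_def by (intro Max_in[OF finite_revenue_set]) auto
  then show ?thesis using that by auto
qed

lemma revenue_nonneg_le:
  assumes "valid_menu m H l \<rho>" "H \<ge> 0"
  shows "0 \<le> revenue m l v \<rho> \<and> revenue m l v \<rho> \<le> real m * H"
proof -
  obtain j where j: "j \<le> l" "snd (entry \<rho> j) = revenue m l v \<rho>" by (rule revenue_attained)
  show ?thesis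
  proof (cases "j = 0")
    case True
    then show ?thesis using j assms by (simp add: entry_def)
  next
    case False
    with j assms(1) have "0 \<le> snd (\<rho> j) \<and> snd (\<rho> j) \<le> real m * H"
      unfolding valid_menu_def by auto
    with j False show ?thesis by (simp add: entry_def)
  qed
qed

lemma revenue_le_sum_values:
  assumes "valid_menu m H l \<rho>" "\<forall>i<m. 0 \<le> v i"
  shows "revenue m l v \<rho> \<le> (\<Sum>i<m. v i)"
proof -
  obtain j where j: "j \<le> l" "\<forall>k\<le>l. buyer_util m v \<rho> k \<le> buyer_util m v \<rho> j"
    "snd (entry \<rho> j) = revenue m l v \<rho>" by (rule revenue_attained)
  show ?thesis
  proof (cases "j = 0")
    case True
    then show ?thesis using j assms(2) by (auto simp: entry_def intro!: sum_nonneg)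
  next
    case False
    have "buyer_util m v \<rho> 0 \<le> buyer_util m v \<rho> j" using j by auto
    then have "snd (\<rho> j) \<le> (\<Sum>i<m. v i * fst (\<rho> j) i)"
      using False by (simp add: buyer_util_def entry_def)
    also have "\<dots> \<le> (\<Sum>i<m. v i)"
      using assms j False unfolding valid_menu_def by (intro sum_mono) (auto intro: mult_left_le)
    finally show ?thesis using j False by (simp add: entry_def)
  qed
qed

lemma buyer_util_cong:
  assumes "j \<le> l" "\<forall>j\<in>{1..l}. snd (\<rho> j) = snd (\<rho>' j) \<and> (\<forall>i<m. fst (\<rho> j) i = fst (\<rho>' j) i)"
  shows "buyer_util m v \<rho> j = buyer_util m v \<rho>' j"
  using assms by (cases "j = 0") (auto simp: buyer_util_def entry_def intro!: sum.cong)

lemma revenue_cong: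
  assumes "\<forall>j\<in>{1..l}. snd (\<rho> j) = snd (\<rho>' j) \<and> (\<forall>i<m. fst (\<rho> j) i = fst (\<rho>' j) i)"
  shows "revenue m l v \<rho> = revenue m l v \<rho>'"
proof -
  have "snd (entry \<rho> j) = snd (entry \<rho>' j)" if "j \<le> l" for j
    using assms that by (auto simp: entry_def)
  with buyer_util_cong[OF _ assms] show ?thesis
    unfolding revenue_def by (intro arg_cong[where f=Max]) (auto; metis)
qed

definition grand_bundle_menu :: "nat \<Rightarrow> (nat \<Rightarrow> real) \<Rightarrow> menu" where
  "grand_bundle_menu m v = (\<lambda>j. ((\<lambda>i. 1), (\<Sum>i<m. v i)))"

lemma valid_grand_bundle_menu:
  assumes "\<forall>i<m. 0 \<le> v i \<and> v i \<le> H"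
  shows "valid_menu m H l (grand_bundle_menu m v)"
proof -
  have "(\<Sum>i<m. v i) \<le> (\<Sum>i<m. H)" using assms by (intro sum_mono) auto
  moreover have "0 \<le> (\<Sum>i<m. v i)" using assms by (intro sum_nonneg) auto
  ultimately
  show ?thesis by (auto simp: valid_menu_def grand_bundle_menu_def)
qed

lemma revenue_grand_bundle_menu:
  assumes "l \<ge> 1"
  shows "revenue m l v (grand_bundle_menu m v) \<ge> (\<Sum>i<m. v i)"
  using revenue_ge_best_price[OF assms, where m=m and v=v and \<rho>="grand_bundle_menu m v"]
  by (simp add: buyer_util_def entry_def grand_bundle_menu_def)

lemma single_type_zero_regret:
  assumes "l \<ge> 1" and v: "\<forall>i<m. 0 \<le> v i \<and> v i \<le> H" and b: "\<forall>t<T. b t = v"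
  shows "menu_regret m H l (\<lambda>_. return_pmf (grand_bundle_menu m v)) b T \<le> 0"
proof -
  have "(\<Sum>t<T. revenue m l (b t) \<rho>) \<le> (\<Sum>t<T. revenue m l (b t) (grand_bundle_menu m v))"
    if "valid_menu m H l \<rho>" for \<rho>
  proof (intro sum_mono)
    fix t assume "t \<in> {..<T}"
    then have "revenue m l (b t) \<rho> \<le> (\<Sum>i<m. v i)"
      using b v by (simp add: revenue_le_sum_values[OF that])
    also have "\<dots> \<le> revenue m l (b t) (grand_bundle_menu m v)"
      using b \<open>t \<in> {..<T}\<close> revenue_grand_bundle_menu[OF assms(1)] by simp
    finally show "revenue m l (b t) \<rho> \<le> revenue m l (b t) (grand_bundle_menu m v)" .
  qed
  then have "(SUP \<rho>\<in>{\<rho>. valid_menu m H l \<rho>}. \<Sum>t<T. revenue m l (b t) \<rho>)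
      \<le> (\<Sum>t<T. revenue m l (b t) (grand_bundle_menu m v))"
    using valid_grand_bundle_menu[OF v] by (intro cSUP_least) auto
  then show ?thesis by (simp add: menu_regret_def learner_reward_def)
qed

definition supported :: "'c set \<Rightarrow> ('c \<Rightarrow> real) \<Rightarrow> bool" where
  "supported D y \<longleftrightarrow> (\<forall>c. c \<notin> D \<longrightarrow> y c = 0)"

definition dot_on :: "'c set \<Rightarrow> ('c \<Rightarrow> real) \<Rightarrow> ('c \<Rightarrow> real) \<Rightarrow> real" where
  "dot_on D a y = (\<Sum>c\<in>D. a c * y c)"

text \<open>A constraint \<open>(a, \<beta>)\<close> stands for the half-space \<open>dot_on D a y \<le> \<beta>\<close>.\<close>
type_synonym 'c constraint = "('c \<Rightarrow> real) \<times> real"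

definition feasible :: "'c set \<Rightarrow> 'c constraint set \<Rightarrow> ('c \<Rightarrow> real) \<Rightarrow> bool" where
  "feasible D R y \<longleftrightarrow> supported D y \<and> (\<forall>r\<in>R. dot_on D (fst r) y \<le> snd r)"

definition active :: "'c set \<Rightarrow> 'c constraint set \<Rightarrow> ('c \<Rightarrow> real) \<Rightarrow> 'c constraint set" where
  "active D R y = {r\<in>R. dot_on D (fst r) y = snd r}"

definition determining :: "'c set \<Rightarrow> 'c constraint set \<Rightarrow> bool" where
  "determining D J \<longleftrightarrow>
     (\<forall>w. supported D w \<longrightarrow> (\<forall>r\<in>J. dot_on D (fst r) w = 0) \<longrightarrow> w = (\<lambda>_. 0))"

definition bounded_constraints :: "'c set \<Rightarrow> 'c constraint set \<Rightarrow> bool" where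
  "bounded_constraints D R \<longleftrightarrow>
     (\<forall>w. supported D w \<longrightarrow> w \<noteq> (\<lambda>_. 0) \<longrightarrow> (\<exists>r\<in>R. dot_on D (fst r) w > 0))"

definition basic_solutions :: "'c set \<Rightarrow> 'c constraint set \<Rightarrow> ('c \<Rightarrow> real) set" where
  "basic_solutions D I =
     {y. supported D y \<and> (\<exists>J\<subseteq>I. card J \<le> card D \<and> determining D J \<and> J \<subseteq> active D I y)}"

lemma fun_sum_apply: "(\<Sum>c\<in>A. g c) x = (\<Sum>c\<in>A. (g c x :: real))"
  by (induction A rule: infinite_finite_induct) auto

lemma dot_on_add_scaled:
  "dot_on D a (\<lambda>c. y c + s * w c) = dot_on D a y + s * dot_on D a w"
  by (simp add: dot_on_def algebra_simps sum.distrib sum_distrib_left)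

lemma dot_on_diff: "dot_on D a (\<lambda>c. y c - z c) = dot_on D a y - dot_on D a z"
  by (simp add: dot_on_def algebra_simps sum_subtractf)

lemma dot_on_diff_left: "dot_on D (\<lambda>c. a c - b c) y = dot_on D a y - dot_on D b y"
  by (simp add: dot_on_def algebra_simps sum_subtractf)

text \<open>Moving along a direction \<open>w\<close> that keeps the tight constraints tight and does not decrease \<open>f\<close>,
  until a new constraint becomes tight; \<open>bounded_constraints\<close> guarantees that one does.\<close>
lemma improving_step:
  assumes R: "finite R" "bounded_constraints D R"
    and f: "\<And>y w s. f (\<lambda>c. y c + s * w c) = f y + s * f w"
    and y: "feasible D R y" and not_det: "\<not> determining D (active D R y)"
  obtains y' where "feasible D R y'" "f y \<le> f y'" "active D R y \<subset> active D R y'"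
proof -
  obtain w0 where w0: "supported D w0" "\<forall>r\<in>active D R y. dot_on D (fst r) w0 = 0" "w0 \<noteq> (\<lambda>_. 0)"
    using not_det unfolding determining_def by blast
  have f_scale: "f (\<lambda>c. s * w0 c) = s * f w0" for s
    using f[of "\<lambda>_. 0" 1 "\<lambda>_. 0"] f[of "\<lambda>_. 0" s w0] by simp
  define w where "w c = (if f w0 \<ge> 0 then 1 else -1) * w0 c" for c
  have fw: "f w \<ge> 0" unfolding w_def f_scale by simp
  have w: "supported D w" "\<forall>r\<in>active D R y. dot_on D (fst r) w = 0" "w \<noteq> (\<lambda>_. 0)"
    using w0 dot_on_add_scaled[of D _ "\<lambda>_. 0" _ w0]
    by (auto simp: w_def supported_def dot_on_def fun_eq_iff)
  define P where "P = {r\<in>R. dot_on D (fst r) w > 0}"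
  have "P \<noteq> {}" using R(2) w unfolding bounded_constraints_def P_def by blast
  have "finite P" using R(1) by (simp add: P_def)
  define ratio where "ratio r = (snd r - dot_on D (fst r) y) / dot_on D (fst r) w" for r
  define t where "t = Min (ratio ` P)"
  have "t \<in> ratio ` P" unfolding t_def using \<open>P \<noteq> {}\<close> \<open>finite P\<close> by (intro Min_in) auto
  then obtain r0 where r0: "r0 \<in> P" "t = ratio r0" by blast
  have t_le: "t \<le> ratio r" if "r \<in> P" for r
    unfolding t_def using \<open>finite P\<close> that by simp
  have t0: "t \<ge> 0" using r0 y unfolding ratio_def P_def feasible_def by auto
  define y' where "y' c = y c + t * w c" for c
  have dot_y': "dot_on D a y' = dot_on D a y + t * dot_on D a w" for a
    unfolding y'_def by (rule dot_on_add_scaled)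
  have "dot_on D (fst r) y' \<le> snd r" if r: "r \<in> R" for r
  proof (cases "r \<in> P")
    case True
    then have "t * dot_on D (fst r) w \<le> ratio r * dot_on D (fst r) w"
      using t_le by (intro mult_right_mono) (auto simp: P_def)
    with True show ?thesis by (simp add: dot_y' ratio_def P_def)
  next
    case False
    with r t0 have "t * dot_on D (fst r) w \<le> 0" by (simp add: P_def mult_nonneg_nonpos)
    moreover have "dot_on D (fst r) y \<le> snd r" using r y by (simp add: feasible_def)
    ultimately show ?thesis by (simp add: dot_y')
  qed
  with y w have "feasible D R y'" by (simp add: feasible_def supported_def y'_def)
  moreover have "f y \<le> f y'" unfolding y'_def f using t0 fw by simp
  moreover have "active D R y \<subset> active D R y'"
  proof -
    have "active D R y \<subseteq> active D R y'" using w(2) by (auto simp: active_def dot_y')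
    moreover have "r0 \<in> active D R y' - active D R y"
      using r0 w(2) by (auto simp: active_def dot_y' P_def ratio_def)
    ultimately show ?thesis by blast
  qed
  ultimately show ?thesis by (rule that)
qed

lemma exists_determining_improvement:
  assumes R: "finite R" "bounded_constraints D R"
    and f: "\<And>y w s. f (\<lambda>c. y c + s * w c) = f y + s * f w"
  shows "feasible D R y \<Longrightarrow> \<exists>y'. feasible D R y' \<and> f y \<le> f y' \<and> determining D (active D R y')"
proof (induction "card (R - active D R y)" arbitrary: y rule: less_induct)
  case less
  show ?case
  proof (cases "determining D (active D R y)")
    case True
    with less.prems show ?thesis by blast
  next
    case False
    then obtain y' where y': "feasible D R y'" "f y \<le> f y'" "active D R y \<subset> active D R y'"
      using improving_step[where f=f, OF R f less.prems False] by blast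
    have "card (R - active D R y') < card (R - active D R y)"
      using R(1) y'(3) by (intro psubset_card_mono) (auto simp: active_def)
    with less.hyps y' show ?thesis by (meson order.trans)
  qed
qed

interpretation fun_vs: vector_space "\<lambda>(r::real) (f::'c \<Rightarrow> real) x. r * f x"
  by unfold_locales (auto simp: fun_eq_iff algebra_simps)

text \<open>A dimension count: the normals, restricted to \<open>D\<close>, span a space of dimension at most \<open>card D\<close>,
  and any basis of their span drawn from them already determines the same point.\<close>
lemma determining_subset_card_le:
  fixes D :: "'c set" and J :: "'c constraint set"
  assumes D: "finite D" and J: "determining D J"
  obtains J' where "J' \<subseteq> J" "card J' \<le> card D" "determining D J'"
proof -
  define normal :: "'c constraint \<Rightarrow> 'c \<Rightarrow> real"
    where "normal r = (\<lambda>c. if c \<in> D then fst r c else 0)" for r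
  define delta :: "'c \<Rightarrow> 'c \<Rightarrow> real" where "delta c0 = (\<lambda>c. if c = c0 then 1 else 0)" for c0
  have dot_normal: "dot_on D (normal r) w = dot_on D (fst r) w" for r w
    by (simp add: dot_on_def normal_def)
  have "normal r = (\<Sum>c\<in>D. (\<lambda>x. fst r c * delta c x))" for r
    by (rule ext) (simp add: normal_def delta_def fun_sum_apply if_distrib sum.delta D cong: if_cong)
  moreover have "(\<Sum>c\<in>D. (\<lambda>x. fst r c * delta c x)) \<in> fun_vs.span (delta ` D)" for r
    by (intro fun_vs.span_sum fun_vs.span_scale fun_vs.span_base) auto
  ultimately have normal_span: "normal ` J \<subseteq> fun_vs.span (delta ` D)" by auto
  obtain B where B: "B \<subseteq> normal ` J" "fun_vs.independent B" "normal ` J \<subseteq> fun_vs.span B"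
    by (rule fun_vs.maximal_independent_subset)
  obtain J' where J': "J' \<subseteq> J" "inj_on normal J'" "B = normal ` J'"
    using B(1) by (auto simp: subset_image_inj)
  have "card B \<le> card (delta ` D)"
    using fun_vs.independent_span_bound[OF _ B(2)] B(1) normal_span D by blast
  also have "\<dots> \<le> card D" by (rule card_image_le[OF D])
  finally have "card J' \<le> card D" using J' card_image by metis
  moreover have "determining D J'"
    unfolding determining_def
  proof (intro allI impI)
    fix w assume w: "supported D w" "\<forall>r\<in>J'. dot_on D (fst r) w = 0"
    have "fun_vs.subspace {z. dot_on D z w = 0}"
      by (auto simp: fun_vs.subspace_def dot_on_def sum.distrib distrib_right mult.assoc
          simp flip: sum_distrib_left)
    moreover have "B \<subseteq> {z. dot_on D z w = 0}" using w(2) J'(3) by (auto simp: dot_normal)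
    ultimately have "fun_vs.span B \<subseteq> {z. dot_on D z w = 0}" by (intro fun_vs.span_minimal)
    with B(3) have "\<forall>r\<in>J. dot_on D (fst r) w = 0" by (auto simp: dot_normal[symmetric])
    with J w(1) show "w = (\<lambda>_. 0)" by (simp add: determining_def)
  qed
  ultimately show ?thesis using J' that by blast
qed

lemma feasible_dominated_by_basic_solution:
  assumes D: "finite D" and R: "finite R" "bounded_constraints D R"
    and f: "\<And>y w s. f (\<lambda>c. y c + s * w c) = f y + s * f w"
    and y: "feasible D R y"
  obtains y' where "y' \<in> basic_solutions D R" "feasible D R y'" "f y \<le> f y'"
proof -
  obtain y' where y': "feasible D R y'" "f y \<le> f y'" "determining D (active D R y')"
    using exists_determining_improvement[where f=f, OF R f y] by blast
  obtain J where "J \<subseteq> active D R y'" "card J \<le> card D" "determining D J"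
    by (rule determining_subset_card_le[OF D y'(3)])
  then have "y' \<in> basic_solutions D R"
    using y'(1) by (auto simp: basic_solutions_def feasible_def active_def)
  with y' show ?thesis using that by blast
qed

lemma basic_solutions_mono: "R \<subseteq> I \<Longrightarrow> basic_solutions D R \<subseteq> basic_solutions D I"
  unfolding basic_solutions_def active_def by blast

lemma card_subsets_card_le:
  assumes "finite U"
  shows "card {J. J \<subseteq> U \<and> card J \<le> d} \<le> (card U + 1) ^ d"
proof -
  define A where "A = insert None (Some ` U)"
  define L where "L = {xs. set xs \<subseteq> A \<and> length xs = d}"
  have finA: "finite A" and cardA: "card A = card U + 1"
    using assms by (simp_all add: A_def card_image inj_on_def)
  have "{J. J \<subseteq> U \<and> card J \<le> d} \<subseteq> (\<lambda>xs. Some -` set xs) ` L"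
  proof
    fix J assume "J \<in> {J. J \<subseteq> U \<and> card J \<le> d}"
    then have J: "J \<subseteq> U" "card J \<le> d" by auto
    obtain ys where ys: "set ys = J" "distinct ys"
      using finite_distinct_list finite_subset[OF J(1) assms] by blast
    define xs where "xs = map Some ys @ replicate (d - card J) None"
    have "xs \<in> L" using J ys distinct_card[OF ys(2)] by (auto simp: L_def A_def xs_def)
    moreover have "Some -` set xs = J" using ys by (auto simp: xs_def)
    ultimately show "J \<in> (\<lambda>xs. Some -` set xs) ` L" by blast
  qed
  then have "card {J. J \<subseteq> U \<and> card J \<le> d} \<le> card ((\<lambda>xs. Some -` set xs) ` L)"
    by (intro card_mono) (simp_all add: L_def finite_lists_length_eq finA)
  also have "\<dots> \<le> card L" by (intro card_image_le) (simp add: L_def finite_lists_length_eq finA)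
  also have "card L = card A ^ d" by (simp add: L_def card_lists_length_eq finA)
  finally show ?thesis by (simp add: cardA)
qed

text \<open>A basic solution is the unique solution of its determining system, so basic solutions
  inject into the small subsets of \<open>I\<close>.\<close>
lemma card_basic_solutions:
  assumes "finite I"
  shows "finite (basic_solutions D I) \<and> card (basic_solutions D I) \<le> (card I + 1) ^ card D"
proof -
  let ?S = "{J. J \<subseteq> I \<and> card J \<le> card D}"
  define sys where "sys y = (SOME J. J \<subseteq> I \<and> card J \<le> card D \<and> determining D J \<and> J \<subseteq> active D I y)" for y
  have sys: "sys y \<subseteq> I \<and> card (sys y) \<le> card D \<and> determining D (sys y) \<and> sys y \<subseteq> active D I y"
    if "y \<in> basic_solutions D I" for y
    unfolding sys_def by (rule someI_ex) (use that in \<open>auto simp: basic_solutions_def\<close>)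
  have "inj_on sys (basic_solutions D I)"
  proof (rule inj_onI)
    fix y1 y2 assume y: "y1 \<in> basic_solutions D I" "y2 \<in> basic_solutions D I" "sys y1 = sys y2"
    have "supported D (\<lambda>c. y1 c - y2 c)" using y by (auto simp: basic_solutions_def supported_def)
    moreover have "\<forall>r\<in>sys y1. dot_on D (fst r) (\<lambda>c. y1 c - y2 c) = 0"
      using sys[OF y(1)] sys[OF y(2)] y(3) by (fastforce simp: dot_on_diff active_def)
    ultimately have "(\<lambda>c. y1 c - y2 c) = (\<lambda>_. 0)" using sys[OF y(1)] by (simp add: determining_def)
    then show "y1 = y2" by (auto simp: fun_eq_iff)
  qed
  moreover have "sys ` basic_solutions D I \<subseteq> ?S" using sys by auto
  moreover have "finite ?S" using assms by auto
  ultimately show ?thesis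
    using inj_on_finite card_inj_on_le card_subsets_card_le[OF assms, of "card D"] by (meson order.trans)
qed

lemma ln_two_ge_half: "1/2 \<le> ln (2::real)"
proof -
  have "exp (1/2::real) \<le> 1 + 1/2 + (1/2)\<^sup>2" by (rule exp_bound) auto
  also have "\<dots> \<le> 2" by (simp add: power2_eq_square)
  finally show ?thesis by (subst ln_ge_iff) auto
qed

lemma constraint_count_le_power:
  fixes V l m K :: nat
  assumes "V * l \<ge> 2" "l \<ge> 1" "m \<ge> 1" "V \<ge> 1"
    and K: "K \<le> 2 * (l * (m + 1)) + V * (l + 1) * (l + 1)"
  shows "K + 1 \<le> (V * l) ^ (m + 6)"
proof -
  define X where "X = V * l"
  have X2: "X \<ge> 2" and lX: "l \<le> X" using assms by (simp_all add: X_def)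
  have "2 * (l * (m + 1)) \<le> 2 * (l * (2 * m))" using assms by simp
  also have "\<dots> \<le> 4 * m * X" using lX by simp
  moreover have "V * (l + 1) * (l + 1) \<le> 4 * X * X"
  proof -
    have "V * (l + 1) * (l + 1) \<le> V * (2 * l) * (2 * l)" using assms by (intro mult_mono) auto
    also have "\<dots> \<le> 4 * X * X" using lX by (simp add: X_def)
    finally show ?thesis .
  qed
  moreover have "1 \<le> X * X" using X2 by (simp add: Suc_le_eq)
  ultimately have "K + 1 \<le> 4 * m * X + 4 * X * X + X * X" using K by linarith
  also have "\<dots> \<le> 4 * m * (X * X) + 4 * m * (X * X) + m * (X * X)"
    using X2 assms(3) by (intro add_mono) (auto intro: mult_mono)
  also have "\<dots> = 9 * m * X\<^sup>2" by (simp add: power2_eq_square)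
  also have "\<dots> \<le> X ^ 4 * X ^ m * X\<^sup>2"
  proof (intro mult_mono)
    have "9 \<le> (2::nat) ^ 4" by simp
    also have "\<dots> \<le> X ^ 4" using X2 by (rule power_mono) simp
    finally show "9 \<le> X ^ 4" .
    have "m < 2 ^ m" by (rule less_exp)
    also have "(2::nat) ^ m \<le> X ^ m" using X2 by (rule power_mono) simp
    finally show "m \<le> X ^ m" by simp
  qed simp_all
  also have "\<dots> = X ^ (m + 6)" by (simp flip: power_add add: algebra_simps)
  finally show ?thesis by (simp add: X_def)
qed

lemma sqrt_ln_plus_one_le:
  fixes N X m l :: nat
  assumes "N \<ge> 1" "N \<le> X ^ ((m + 6) * (l * (m + 1)))" "X \<ge> 2" "m \<ge> 1" "l \<ge> 1"
  shows "sqrt (ln N + 1) \<le> 6 * m * l * ln X"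
proof -
  have "ln 2 \<le> ln (real X)" using assms(3) by simp
  then have lnX: "ln X \<ge> 1/2" using ln_two_ge_half by linarith
  have "(1::real) \<le> real m ^ 2" "(1::real) \<le> real l" using assms(4,5) by (simp_all add: one_le_power)
  then have ml: "1 \<le> real m ^ 2 * real l" using mult_mono[of 1 "real m ^ 2" 1 "real l"] by simp
  have "real N \<le> real X ^ ((m + 6) * (l * (m + 1)))"
    using assms(2) by (metis of_nat_le_iff of_nat_power)
  then have "ln N \<le> ln (real X ^ ((m + 6) * (l * (m + 1))))"
    using assms(1,3) by (subst ln_le_cancel_iff) auto
  also have "\<dots> = real ((m + 6) * (m + 1)) * real l * ln X"
    using assms(3) by (simp add: ln_realpow algebra_simps)
  also have "\<dots> \<le> (14 * real m ^ 2) * real l * ln X"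
  proof (intro mult_right_mono)
    have "m \<le> m * m" "1 \<le> m * m" using assms(4) by simp_all
    moreover have "(m + 6) * (m + 1) = m * m + 7 * m + 6" by (simp add: algebra_simps)
    ultimately have "(m + 6) * (m + 1) \<le> 14 * m\<^sup>2" unfolding power2_eq_square by linarith
    then have "real ((m + 6) * (m + 1)) \<le> real (14 * m\<^sup>2)" by (simp only: of_nat_le_iff)
    then show "real ((m + 6) * (m + 1)) \<le> 14 * real m ^ 2" by simp
  qed (use lnX in simp_all)
  finally have "ln N + 1 \<le> 14 * (real m ^ 2 * real l * ln X) + 2 * ln X" using lnX by simp
  moreover have "ln X \<le> real m ^ 2 * real l * ln X" using mult_right_mono[OF ml, of "ln X"] lnX by simp
  ultimately have "ln N + 1 \<le> 16 * (real m ^ 2 * real l * ln X)" by linarith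
  also have "16 * (real m ^ 2 * real l * ln X) \<le> 36 * (real l * ln X) * (real m ^ 2 * real l * ln X)"
  proof (intro mult_right_mono)
    show "16 \<le> 36 * (real l * ln X)" using assms(5) lnX mult_mono[of 1 "real l" "1/2" "ln X"] by simp
  qed (use ml lnX in \<open>simp add: mult.commute\<close>)
  also have "\<dots> = (6 * m * l * ln X)\<^sup>2" by (simp add: power2_eq_square)
  finally show ?thesis using lnX by (intro real_le_lsqrt) simp_all
qed

locale menu_types =
  fixes m :: nat and H :: real and l :: nat and Vs :: "(nat \<Rightarrow> real) set"
  assumes finite_types: "finite Vs"
begin

text \<open>Coordinate \<open>(j, i)\<close> with \<open>i < m\<close> is the probability of item \<open>i\<close> in entry \<open>j\<close>; \<open>(j, m)\<close> is its price.\<close>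
definition coords :: "(nat \<times> nat) set" where
  "coords = {1..l} \<times> {..m}"

definition decode_menu :: "(nat \<times> nat \<Rightarrow> real) \<Rightarrow> menu" where
  "decode_menu y = (\<lambda>j. if j \<in> {1..l} then ((\<lambda>i. if i < m then y (j, i) else 0), y (j, m))
                                    else ((\<lambda>_. 0), 0))"

definition encode_menu :: "menu \<Rightarrow> nat \<times> nat \<Rightarrow> real" where
  "encode_menu \<rho> = (\<lambda>(j, i). if (j, i) \<in> coords then (if i < m then fst (\<rho> j) i else snd (\<rho> j)) else 0)"

definition utility_coeffs :: "(nat \<Rightarrow> real) \<Rightarrow> nat \<Rightarrow> nat \<times> nat \<Rightarrow> real" where
  "utility_coeffs v j = (\<lambda>(j', i). if j' = j \<and> j \<ge> 1 then (if i < m then v i else if i = m then -1 else 0) else 0)"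

definition coord_cap :: "nat \<times> nat \<Rightarrow> real" where
  "coord_cap c = (if snd c < m then 1 else real m * H)"

definition unit_coord :: "nat \<times> nat \<Rightarrow> real \<Rightarrow> nat \<times> nat \<Rightarrow> real" where
  "unit_coord c s = (\<lambda>x. if x = c then s else 0)"

definition box_constraints :: "(nat \<times> nat) constraint set" where
  "box_constraints = (\<lambda>c. (unit_coord c (-1), 0)) ` coords \<union> (\<lambda>c. (unit_coord c 1, coord_cap c)) ` coords"

definition ic_constraint :: "(nat \<Rightarrow> real) \<Rightarrow> nat \<Rightarrow> nat \<Rightarrow> (nat \<times> nat) constraint" where
  "ic_constraint v j k = ((\<lambda>c. utility_coeffs v k c - utility_coeffs v j c), 0)"

definition all_constraints :: "(nat \<times> nat) constraint set" where
  "all_constraints = box_constraints \<union> (\<lambda>(v, j, k). ic_constraint v j k) ` (Vs \<times> {..l} \<times> {..l})"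

definition candidate_menus :: "menu set" where
  "candidate_menus = {\<rho> \<in> decode_menu ` basic_solutions coords all_constraints. valid_menu m H l \<rho>}"

lemma finite_coords: "finite coords"
  by (simp add: coords_def)

lemma card_coords: "card coords = l * (m + 1)"
  by (simp add: coords_def card_cartesian_product)

lemma dot_on_unit_coord:
  assumes "c \<in> coords"
  shows "dot_on coords (unit_coord c s) y = s * y c"
proof -
  have "dot_on coords (unit_coord c s) y = (\<Sum>x\<in>coords. if x = c then s * y c else 0)"
    unfolding dot_on_def by (rule sum.cong) (auto simp: unit_coord_def)
  then show ?thesis using assms finite_coords by simp
qed

lemma box_constraints_iff:
  "(\<forall>r\<in>box_constraints. dot_on coords (fst r) y \<le> snd r) \<longleftrightarrow> (\<forall>c\<in>coords. 0 \<le> y c \<and> y c \<le> coord_cap c)"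
proof
  assume box: "\<forall>r\<in>box_constraints. dot_on coords (fst r) y \<le> snd r"
  show "\<forall>c\<in>coords. 0 \<le> y c \<and> y c \<le> coord_cap c"
  proof
    fix c assume c: "c \<in> coords"
    then have "dot_on coords (unit_coord c (-1)) y \<le> 0" "dot_on coords (unit_coord c 1) y \<le> coord_cap c"
      using box[rule_format, of "(unit_coord c (-1), 0)"] box[rule_format, of "(unit_coord c 1, coord_cap c)"]
      by (auto simp: box_constraints_def)
    with c show "0 \<le> y c \<and> y c \<le> coord_cap c" by (simp add: dot_on_unit_coord)
  qed
qed (auto simp: box_constraints_def dot_on_unit_coord)

lemma bounded_constraints_box:
  assumes "box_constraints \<subseteq> R"
  shows "bounded_constraints coords R"
  unfolding bounded_constraints_def
proof (intro allI impI)
  fix w assume "supported coords w" "w \<noteq> (\<lambda>_. 0)"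
  then obtain c where c: "c \<in> coords" "w c \<noteq> 0" by (auto simp: supported_def fun_eq_iff)
  then have "(unit_coord c 1, coord_cap c) \<in> R \<and> (unit_coord c (-1), 0) \<in> R"
    using assms by (auto simp: box_constraints_def)
  with c show "\<exists>r\<in>R. dot_on coords (fst r) w > 0"
    by (cases "w c > 0") (force simp: dot_on_unit_coord)+
qed

lemma buyer_util_decode_menu:
  assumes "j \<le> l"
  shows "buyer_util m v (decode_menu y) j = dot_on coords (utility_coeffs v j) y"
proof (cases "j = 0")
  case True
  then show ?thesis by (simp add: buyer_util_def entry_def dot_on_def utility_coeffs_def case_prod_beta)
next
  case False
  then have j: "j \<in> {1..l}" using assms by simp
  have "dot_on coords (utility_coeffs v j) y
      = (\<Sum>j'\<in>{1..l}. \<Sum>i\<le>m. utility_coeffs v j (j', i) * y (j', i))"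
    by (simp add: dot_on_def coords_def sum.cartesian_product)
  also have "\<dots> = (\<Sum>j'\<in>{1..l}. if j' = j then (\<Sum>i\<le>m. utility_coeffs v j (j, i) * y (j, i)) else 0)"
    by (rule sum.cong) (auto simp: utility_coeffs_def)
  also have "\<dots> = (\<Sum>i\<in>insert m {..<m}. utility_coeffs v j (j, i) * y (j, i))"
    using j by (simp add: atMost_Suc lessThan_Suc_atMost[symmetric])
  also have "\<dots> = (\<Sum>i<m. v i * y (j, i)) - y (j, m)"
    using False by (simp add: utility_coeffs_def)
  finally show ?thesis using j by (simp add: buyer_util_def entry_def decode_menu_def)
qed

lemma valid_decode_menu:
  assumes "\<forall>c\<in>coords. 0 \<le> y c \<and> y c \<le> coord_cap c"
  shows "valid_menu m H l (decode_menu y)"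
  unfolding valid_menu_def
proof (intro ballI conjI allI impI)
  fix j assume j: "j \<in> {1..l}"
  then have y: "0 \<le> y (j, i) \<and> y (j, i) \<le> coord_cap (j, i)" if "i \<le> m" for i
    using assms that by (simp add: coords_def)
  show "0 \<le> snd (decode_menu y j)" "snd (decode_menu y j) \<le> real m * H"
    using y[of m] j by (simp_all add: decode_menu_def coord_cap_def)
  fix i assume "i < m"
  then show "0 \<le> fst (decode_menu y j) i" "fst (decode_menu y j) i \<le> 1"
    using y[of i] j by (simp_all add: decode_menu_def coord_cap_def)
qed

lemma decode_encode_menu:
  "\<forall>j\<in>{1..l}. snd (decode_menu (encode_menu \<rho>) j) = snd (\<rho> j)
     \<and> (\<forall>i<m. fst (decode_menu (encode_menu \<rho>) j) i = fst (\<rho> j) i)"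
  by (simp add: decode_menu_def encode_menu_def coords_def)

lemma dot_on_ic_constraint:
  assumes "j \<le> l" "k \<le> l"
  shows "dot_on coords (fst (ic_constraint v j k)) y
    = buyer_util m v (decode_menu y) k - buyer_util m v (decode_menu y) j"
  using assms by (simp add: ic_constraint_def dot_on_diff_left buyer_util_decode_menu)

lemma revenue_decode_menu_ge:
  assumes "j \<le> l" and ic: "\<forall>k\<le>l. dot_on coords (fst (ic_constraint v j k)) y \<le> snd (ic_constraint v j k)"
  shows "snd (entry (decode_menu y) j) \<le> revenue m l v (decode_menu y)"
proof (intro revenue_ge_best_price[OF assms(1)] allI impI)
  fix k assume k: "k \<le> l"
  have "snd (ic_constraint v j k) = 0" by (simp add: ic_constraint_def)
  with ic k have "dot_on coords (fst (ic_constraint v j k)) y \<le> 0" by auto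
  then show "buyer_util m v (decode_menu y) k \<le> buyer_util m v (decode_menu y) j"
    by (simp add: dot_on_ic_constraint[OF assms(1) k])
qed

lemma finite_all_constraints: "finite all_constraints"
  unfolding all_constraints_def box_constraints_def using finite_coords finite_types by auto

lemma card_box_constraints: "card box_constraints \<le> 2 * card coords"
proof -
  have "card box_constraints
      \<le> card ((\<lambda>c. (unit_coord c (-1), 0 :: real)) ` coords) + card ((\<lambda>c. (unit_coord c 1, coord_cap c)) ` coords)"
    unfolding box_constraints_def by (rule card_Un_le)
  also have "\<dots> \<le> card coords + card coords"
    by (intro add_mono card_image_le finite_coords)
  finally show ?thesis by simp
qed

lemma card_all_constraints: "card all_constraints \<le> 2 * card coords + card Vs * (l + 1) * (l + 1)"
proof -
  have "card all_constraints \<le> card box_constraints + card ((\<lambda>(v, j, k). ic_constraint v j k) ` (Vs \<times> {..l} \<times> {..l}))"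
    unfolding all_constraints_def by (rule card_Un_le)
  also have "\<dots> \<le> 2 * card coords + card (Vs \<times> {..l} \<times> {..l})"
    by (intro add_mono card_box_constraints card_image_le) (simp add: finite_types)
  also have "card (Vs \<times> {..l} \<times> {..l}) = card Vs * (l + 1) * (l + 1)"
    by (simp add: card_cartesian_product algebra_simps)
  finally show ?thesis .
qed

lemma card_candidate_menus:
  "finite candidate_menus \<and> card candidate_menus \<le> (card all_constraints + 1) ^ card coords"
proof -
  have fin: "finite (basic_solutions coords all_constraints)"
    and card: "card (basic_solutions coords all_constraints) \<le> (card all_constraints + 1) ^ card coords"
    using card_basic_solutions[OF finite_all_constraints] by auto
  have sub: "candidate_menus \<subseteq> decode_menu ` basic_solutions coords all_constraints"
    by (auto simp: candidate_menus_def)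
  then have "finite candidate_menus" using fin by (meson finite_imageI finite_subset)
  moreover have "card candidate_menus \<le> card (basic_solutions coords all_constraints)"
    using sub fin by (meson card_image_le card_mono finite_imageI order.trans)
  ultimately show ?thesis using card by simp
qed

lemma candidate_menu_dominates:
  assumes \<rho>: "valid_menu m H l \<rho>" and b: "\<forall>t<T. b t \<in> Vs"
  obtains \<rho>' where "\<rho>' \<in> candidate_menus"
    "(\<Sum>t<T. revenue m l (b t) \<rho>) \<le> (\<Sum>t<T. revenue m l (b t) \<rho>')"
proof -
  define y0 where "y0 = encode_menu \<rho>"
  have rev0: "revenue m l v (decode_menu y0) = revenue m l v \<rho>" for v
    unfolding y0_def by (rule revenue_cong[OF decode_encode_menu])
  have "\<forall>v. \<exists>j. j \<le> l \<and> (\<forall>k\<le>l. buyer_util m v (decode_menu y0) k \<le> buyer_util m v (decode_menu y0) j)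
      \<and> snd (entry (decode_menu y0) j) = revenue m l v (decode_menu y0)"
    by (metis revenue_attained)
  then obtain \<sigma> where \<sigma>: "\<And>v. \<sigma> v \<le> l"
    "\<And>v k. k \<le> l \<Longrightarrow> buyer_util m v (decode_menu y0) k \<le> buyer_util m v (decode_menu y0) (\<sigma> v)"
    "\<And>v. snd (entry (decode_menu y0) (\<sigma> v)) = revenue m l v (decode_menu y0)"
    by metis
  define R where "R = box_constraints \<union> (\<lambda>(v, k). ic_constraint v (\<sigma> v) k) ` (Vs \<times> {..l})"
  have "ic_constraint v (\<sigma> v) k \<in> all_constraints" if "v \<in> Vs" "k \<le> l" for v k
    unfolding all_constraints_def using that \<sigma>(1)[of v] by (intro UnI2 image_eqI[of _ _ "(v, \<sigma> v, k)"]) auto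
  moreover have "box_constraints \<subseteq> all_constraints" by (simp add: all_constraints_def)
  ultimately have R_sub: "R \<subseteq> all_constraints" unfolding R_def by auto
  then have R_fin: "finite R" using finite_all_constraints finite_subset by auto
  have ic: "dot_on coords (fst (ic_constraint v (\<sigma> v) k)) y \<le> snd (ic_constraint v (\<sigma> v) k)"
    if "feasible coords R y" "v \<in> Vs" "k \<le> l" for y v k
    using that by (auto simp: feasible_def R_def)
  have "\<forall>c\<in>coords. 0 \<le> y0 c \<and> y0 c \<le> coord_cap c"
    using \<rho> by (auto simp: y0_def encode_menu_def coords_def coord_cap_def valid_menu_def)
  moreover have "dot_on coords (fst (ic_constraint v (\<sigma> v) k)) y0 \<le> snd (ic_constraint v (\<sigma> v) k)"
    if "k \<le> l" for v k
    using \<sigma>(2)[OF that] by (simp add: dot_on_ic_constraint[OF \<sigma>(1) that]) (simp add: ic_constraint_def)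
  moreover have "supported coords y0" by (simp add: supported_def y0_def encode_menu_def)
  ultimately have "feasible coords R y0"
    unfolding feasible_def R_def using box_constraints_iff[of y0] by auto
  define f where "f y = (\<Sum>t<T. snd (entry (decode_menu y) (\<sigma> (b t))))" for y
  have "snd (entry (decode_menu (\<lambda>c. y c + s * w c)) j)
      = snd (entry (decode_menu y) j) + s * snd (entry (decode_menu w) j)" for y w s j
    by (simp add: entry_def decode_menu_def)
  then have f_linear: "f (\<lambda>c. y c + s * w c) = f y + s * f w" for y w s
    by (simp add: f_def sum.distrib sum_distrib_left)
  obtain y' where y': "y' \<in> basic_solutions coords R" "feasible coords R y'" "f y0 \<le> f y'"
    by (rule feasible_dominated_by_basic_solution[where f=f, OF finite_coords R_fin
          bounded_constraints_box f_linear \<open>feasible coords R y0\<close>]) (simp add: R_def)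
  have "\<forall>r\<in>box_constraints. dot_on coords (fst r) y' \<le> snd r"
    using y'(2) by (simp add: feasible_def R_def)
  then have "valid_menu m H l (decode_menu y')" by (simp add: box_constraints_iff valid_decode_menu)
  then have candidate: "decode_menu y' \<in> candidate_menus"
    using y'(1) basic_solutions_mono[OF R_sub] by (auto simp: candidate_menus_def)
  have "(\<Sum>t<T. revenue m l (b t) \<rho>) = f y0"
    unfolding f_def by (simp add: \<sigma>(3) rev0)
  moreover have "f y' \<le> (\<Sum>t<T. revenue m l (b t) (decode_menu y'))"
    unfolding f_def using b \<sigma>(1) ic[OF y'(2)] by (intro sum_mono revenue_decode_menu_ge) auto
  ultimately have "(\<Sum>t<T. revenue m l (b t) \<rho>) \<le> (\<Sum>t<T. revenue m l (b t) (decode_menu y'))"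
    using y'(3) by linarith
  with candidate show ?thesis by (rule that)
qed

lemma candidate_menus_nonempty:
  assumes "valid_menu m H l \<rho>"
  shows "candidate_menus \<noteq> {}"
  using candidate_menu_dominates[OF assms, of 0] by blast

lemma hedge_on_candidate_menus_regret:
  assumes "m \<ge> 1" "H > 0" and \<rho>: "valid_menu m H l \<rho>"
  obtains A where "\<forall>h. set_pmf (A h) \<subseteq> {\<rho>. valid_menu m H l \<rho>}"
    "\<And>b. \<forall>t<T. b t \<in> Vs \<Longrightarrow>
       menu_regret m H l A b T \<le> 2 * (real m * H) * sqrt (ln (card candidate_menus) + 1) * sqrt T"
proof -
  let ?E = candidate_menus and ?B = "real m * H"
  have E: "finite ?E" "?E \<noteq> {}" using card_candidate_menus candidate_menus_nonempty[OF \<rho>] by auto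
  have B: "?B > 0" using assms by simp
  have valid: "valid_menu m H l \<rho>'" if "\<rho>' \<in> ?E" for \<rho>' using that by (simp add: candidate_menus_def)
  obtain \<eta> where \<eta>: "\<And>u x. (\<And>t x. t < T \<Longrightarrow> x \<in> ?E \<Longrightarrow> 0 \<le> u t x \<and> u t x \<le> ?B) \<Longrightarrow> x \<in> ?E \<Longrightarrow>
      (\<Sum>t<T. u t x) \<le> learner_reward (hedge \<eta> ?E) u T + 2 * ?B * sqrt (ln (card ?E) + 1) * sqrt T"
    by (rule hedge_tuned_regret[OF E B, where T = T]) blast
  show ?thesis
  proof (rule that)
    show "\<forall>h. set_pmf (hedge \<eta> ?E h) \<subseteq> {\<rho>. valid_menu m H l \<rho>}"
      using set_pmf_hedge[OF E] valid by blast
    fix b :: "nat \<Rightarrow> nat \<Rightarrow> real" assume b: "\<forall>t<T. b t \<in> Vs"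
    let ?u = "\<lambda>t. revenue m l (b t)"
    have u: "0 \<le> ?u t x \<and> ?u t x \<le> ?B" if "x \<in> ?E" for t x
      using revenue_nonneg_le[OF valid[OF that]] assms(2) by simp
    have "(\<Sum>t<T. ?u t \<pi>) \<le> learner_reward (hedge \<eta> ?E) ?u T + 2 * ?B * sqrt (ln (card ?E) + 1) * sqrt T"
      if \<pi>: "valid_menu m H l \<pi>" for \<pi>
    proof -
      obtain \<rho>' where "\<rho>' \<in> ?E" "(\<Sum>t<T. ?u t \<pi>) \<le> (\<Sum>t<T. ?u t \<rho>')"
        by (rule candidate_menu_dominates[OF \<pi> b])
      moreover have "(\<Sum>t<T. ?u t \<rho>')
          \<le> learner_reward (hedge \<eta> ?E) ?u T + 2 * ?B * sqrt (ln (card ?E) + 1) * sqrt T"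
        by (rule \<eta>) (use u \<open>\<rho>' \<in> ?E\<close> in auto)
      ultimately show ?thesis by linarith
    qed
    then have "(SUP \<rho>\<in>{\<rho>. valid_menu m H l \<rho>}. \<Sum>t<T. ?u t \<rho>)
        \<le> learner_reward (hedge \<eta> ?E) ?u T + 2 * ?B * sqrt (ln (card ?E) + 1) * sqrt T"
      using \<rho> by (intro cSUP_least) auto
    then show "menu_regret m H l (hedge \<eta> ?E) b T \<le> 2 * ?B * sqrt (ln (card ?E) + 1) * sqrt T"
      by (simp add: menu_regret_def)
  qed
qed

lemma sqrt_ln_card_candidate_menus:
  assumes "m \<ge> 1" "l \<ge> 1" "card Vs * l \<ge> 2" "candidate_menus \<noteq> {}"
  shows "sqrt (ln (card candidate_menus) + 1) \<le> 6 * m * l * ln (real (card Vs) * real l)"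
proof -
  have "card Vs \<ge> 1" using assms(3) by (cases "card Vs") auto
  then have "card all_constraints + 1 \<le> (card Vs * l) ^ (m + 6)"
    using assms card_all_constraints card_coords by (intro constraint_count_le_power) auto
  then have "(card all_constraints + 1) ^ card coords \<le> ((card Vs * l) ^ (m + 6)) ^ card coords"
    by (rule power_mono) simp
  then have "card candidate_menus \<le> ((card Vs * l) ^ (m + 6)) ^ card coords"
    using card_candidate_menus by simp
  then have "card candidate_menus \<le> (card Vs * l) ^ ((m + 6) * (l * (m + 1)))"
    by (simp add: card_coords power_mult)
  moreover have "card candidate_menus \<ge> 1"
    using assms(4) card_candidate_menus by (simp add: Suc_le_eq card_gt_0_iff)
  ultimately show ?thesis using sqrt_ln_plus_one_le[OF _ _ assms(3,1,2)] by simp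
qed

end

lemma menu_learner_regret_bound:
  assumes "m \<ge> 1" "H > 0" "l \<ge> 1" "finite Vs" "card Vs \<ge> 2"
    and types: "\<forall>v\<in>Vs. \<forall>i<m. 0 \<le> v i \<and> v i \<le> H"
  obtains A :: learner where "\<forall>h. set_pmf (A h) \<subseteq> {\<rho>. valid_menu m H l \<rho>}"
    "\<And>b. \<forall>t<T. b t \<in> Vs \<Longrightarrow>
       menu_regret m H l A b T \<le> 12 * real m ^ 2 * H * real l * sqrt T * ln (real (card Vs) * real l)"
proof -
  interpret menu_types m H l Vs by unfold_locales (rule assms(4))
  have "Vs \<noteq> {}" using assms(5) by auto
  then obtain v where "v \<in> Vs" by blast
  with types have \<rho>: "valid_menu m H l (grand_bundle_menu m v)" by (simp add: valid_grand_bundle_menu)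
  have "card Vs * l \<ge> 2 * 1" by (rule mult_le_mono[OF assms(5,3)])
  then have bound: "sqrt (ln (card candidate_menus) + 1) \<le> 6 * m * l * ln (real (card Vs) * real l)"
    using sqrt_ln_card_candidate_menus assms(1,3) candidate_menus_nonempty[OF \<rho>] by simp
  obtain A where A: "\<forall>h. set_pmf (A h) \<subseteq> {\<rho>. valid_menu m H l \<rho>}"
    "\<And>b. \<forall>t<T. b t \<in> Vs \<Longrightarrow>
       menu_regret m H l A b T \<le> 2 * (real m * H) * sqrt (ln (card candidate_menus) + 1) * sqrt T"
    by (rule hedge_on_candidate_menus_regret[OF assms(1,2) \<rho>, where T = T]) blast
  show ?thesis
  proof (rule that[OF A(1)])
    fix b assume "\<forall>t<T. b t \<in> Vs"
    then have "menu_regret m H l A b T \<le> 2 * (real m * H) * sqrt (ln (card candidate_menus) + 1) * sqrt T"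
      by (rule A(2))
    also have "\<dots> \<le> 2 * (real m * H) * (6 * m * l * ln (real (card Vs) * real l)) * sqrt T"
      using bound assms(2) by (intro mult_right_mono mult_left_mono) auto
    also have "\<dots> = 12 * real m ^ 2 * H * real l * sqrt T * ln (real (card Vs) * real l)"
      by (simp add: power2_eq_square)
    finally show "menu_regret m H l A b T \<le> 12 * real m ^ 2 * H * real l * sqrt T * ln (real (card Vs) * real l)" .
  qed
qed

text \<open>Needed when \<open>|V| = \<ell> = 1\<close>, where the bound is \<open>0\<close>: a single type is served optimally by one fixed menu.\<close>
lemma single_type_learner_regret_bound:
  assumes "H > 0" "l \<ge> 1" "Vs = {v}" and v: "\<forall>i<m. 0 \<le> v i \<and> v i \<le> H"
  obtains A :: learner where "\<forall>h. set_pmf (A h) \<subseteq> {\<rho>. valid_menu m H l \<rho>}"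
    "\<And>b. \<forall>t<T. b t \<in> Vs \<Longrightarrow>
       menu_regret m H l A b T \<le> 12 * real m ^ 2 * H * real l * sqrt T * ln (real (card Vs) * real l)"
proof (rule that)
  show "\<forall>h. set_pmf (return_pmf (grand_bundle_menu m v)) \<subseteq> {\<rho>. valid_menu m H l \<rho>}"
    using valid_grand_bundle_menu[OF v] by simp
  fix b :: "nat \<Rightarrow> nat \<Rightarrow> real" assume "\<forall>t<T. b t \<in> Vs"
  then have "menu_regret m H l (\<lambda>_. return_pmf (grand_bundle_menu m v)) b T \<le> 0"
    using assms(3) by (intro single_type_zero_regret[OF assms(2) v]) simp
  moreover have "0 \<le> 12 * real m ^ 2 * H * real l * sqrt T * ln (real (card Vs) * real l)"
    using assms by simp
  ultimately show "menu_regret m H l (\<lambda>_. return_pmf (grand_bundle_menu m v)) b T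
      \<le> 12 * real m ^ 2 * H * real l * sqrt T * ln (real (card Vs) * real l)" by linarith
qed

theorem mainTheorem19:
  "\<exists>C>0. \<forall>(m::nat) (H::real) (l::nat) (T::nat) (Vs :: (nat \<Rightarrow> real) set).
      m \<ge> 1 \<longrightarrow> H > 0 \<longrightarrow> l \<ge> 1 \<longrightarrow> finite Vs \<longrightarrow> Vs \<noteq> {} \<longrightarrow>
      (\<forall>v\<in>Vs. \<forall>i<m. 0 \<le> v i \<and> v i \<le> H) \<longrightarrow>
      (\<exists>A :: learner.
         (\<forall>h. set_pmf (A h) \<subseteq> {\<rho>. valid_menu m H l \<rho>}) \<and>
         (\<forall>b :: nat \<Rightarrow> nat \<Rightarrow> real. (\<forall>t<T. b t \<in> Vs) \<longrightarrow>
            menu_regret m H l A b T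
              \<le> C * real m ^ 2 * H * real l * sqrt (real T) * ln (real (card Vs) * real l)))"
proof (intro exI[of _ 12] conjI allI impI)
  fix m :: nat and H :: real and l T :: nat and Vs :: "(nat \<Rightarrow> real) set"
  assume m: "m \<ge> 1" and H: "H > 0" and l: "l \<ge> 1" and Vs: "finite Vs" "Vs \<noteq> {}"
    and types: "\<forall>v\<in>Vs. \<forall>i<m. 0 \<le> v i \<and> v i \<le> H"
  obtain A :: learner where A: "\<forall>h. set_pmf (A h) \<subseteq> {\<rho>. valid_menu m H l \<rho>}"
    "\<And>b. \<forall>t<T. b t \<in> Vs \<Longrightarrow>
       menu_regret m H l A b T \<le> 12 * real m ^ 2 * H * real l * sqrt T * ln (real (card Vs) * real l)"
  proof (cases "card Vs = 1")
    case True
    then obtain v where v: "Vs = {v}" by (auto simp: card_1_singleton_iff)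
    with types have "\<forall>i<m. 0 \<le> v i \<and> v i \<le> H" by simp
    from single_type_learner_regret_bound[OF H l v this, where T = T] that show thesis by blast
  next
    case False
    moreover have "card Vs > 0" using Vs by (simp add: card_gt_0_iff)
    ultimately have "card Vs \<ge> 2" by linarith
    from menu_learner_regret_bound[OF m H l Vs(1) this types, where T = T] that show thesis by blast
  qed
  then show "\<exists>A :: learner. (\<forall>h. set_pmf (A h) \<subseteq> {\<rho>. valid_menu m H l \<rho>}) \<and>
      (\<forall>b. (\<forall>t<T. b t \<in> Vs) \<longrightarrow>
         menu_regret m H l A b T \<le> 12 * real m ^ 2 * H * real l * sqrt T * ln (real (card Vs) * real l))"
    by blast
qed simp

end
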